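(* Let $\lambda\in\mathbb{C}$, let $(p_l)_{l\in\mathbb{Z}},(q_m)_{m\in\mathbb{Z}}$ be complex sequences, and let $u,v:\mathbb{Z}^2\to\mathbb{C}$ satisfy, for all $(l,m)\in\mathbb{Z}^2$ (with all denominators nonzero), \[ \widetilde{\overline u}-u-\frac{q_{m+1}-p_l}{\widetilde u}+\frac{q_m-p_{l+1}}{\overline u}=0,\qquad u-\widetilde{\overline v}-\frac{q_m-p_{l+1}}{\overline u}+\frac{\lambda-p_l}{\widetilde v}=0, \] \[ (u-v)\Big(\frac{q_m-p_l}{u}+\widetilde v\Big)-q_m+\lambda=0,\qquad \frac{q_m-p_l}{u}-\frac{\lambda-p_l}{v}-\overline u+\overline v=0. \] Then $v$ satisfies, for all $(l,m)$, \[ \begin{aligned} &q_m\big(v\overline v-\widetilde v\widetilde{\overline v}\big)^2+\big(v-\widetilde{\overline v}\big)\big(\overline v-\widetilde v\big)\big(\lambda-v\overline v\big)\big(\lambda-\widetilde v\widetilde{\overline v}\big) +\big(p_{l+1}v-p_l\widetilde{\overline v}\big)\big(p_l\overline v-p_{l+1}\widetilde v\big)\\ &\quad-(p_l+p_{l+1})\big(\lambda v\overline v+\lambda\widetilde v\widetilde{\overline v}-2v\overline v\widetilde v\widetilde{\overline v}\big) +\big(p_{l+1}v\widetilde v+p_l\overline v\widetilde{\overline v}\big)\big(2\lambda-v\overline v-\widetilde v\widetilde{\overline v}\big)=0. \end{aligned} \]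
   Context: Shift notation: for $f:\mathbb{Z}^2\to\mathbb{C}$, $f=f_{l,m}$, $\overline f=f_{l+1,m}$, $\widetilde f=f_{l,m+1}$, $\widetilde{\overline f}=f_{l+1,m+1}$; $p_l$ and $q_m$ are parameters depending only on $l$ and only on $m$ respectively. *)

theory Defs
  imports Complex_Main
begin

end

theory Submission
  imports Defs
begin

text \<open>
  At a fixed vertex write \<open>v, vb, vt, vh\<close> for \<open>v, \<overline>v, \<widetilde>v, \<widetilde>\<overline>v\<close>, \<open>ub\<close> for \<open>\<overline>u\<close>,
  \<open>p, P\<close> for \<open>p\<^sub>l, p\<^sub>l\<^sub>+\<^sub>1\<close> and \<open>q\<close> for \<open>q\<^sub>m\<close>.  Cleared of denominators, the third
  equation is a quadratic for \<open>u\<close> over the values of \<open>v\<close>.  The fourth equation and the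
  third equation shifted in \<open>l\<close> make \<open>ub\<close> linear in \<open>u\<close>; the second equation then
  determines \<open>u\<close> as a rational function \<open>v M / (vt D)\<close> of the four values of \<open>v\<close>.
  Substituting this back into the quadratic gives, after multiplication by \<open>vt\<close>,
  the quad-graph equation for \<open>v\<close>.
\<close>

lemma eq3_as_quadratic:
  fixes u v vt lam p q :: "'a :: field"
  assumes "u \<noteq> 0" and "(u - v) * ((q - p) / u + vt) - q + lam = 0"
  shows "vt * u^2 + (lam - p - v * vt) * u - v * (q - p) = 0"
proof -
  have "u * ((u - v) * ((q - p) / u + vt) - q + lam) = vt * u^2 + (lam - p - v * vt) * u - v * (q - p)"
    using assms(1) by (simp add: field_simps power2_eq_square)
  with assms(2) show ?thesis by simp
qed

lemma eq4_cleared: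
  fixes u ub v vb lam p q :: "'a :: field"
  assumes "u \<noteq> 0" "v \<noteq> 0" and "(q - p) / u - (lam - p) / v - ub + vb = 0"
  shows "(q - p) * v - (lam - p) * u - ub * u * v + vb * u * v = 0"
proof -
  have "u * v * ((q - p) / u - (lam - p) / v - ub + vb)
        = (q - p) * v - (lam - p) * u - ub * u * v + vb * u * v"
    using assms(1,2) by (simp add: field_simps)
  with assms(3) show ?thesis by simp
qed

lemma eq2_cleared:
  fixes u ub vt vh lam p P q :: "'a :: field"
  assumes "ub \<noteq> 0" "vt \<noteq> 0" and "u - vh - (q - P) / ub + (lam - p) / vt = 0"
  shows "u * ub * vt - vh * ub * vt - (q - P) * vt + (lam - p) * ub = 0"
proof -
  have "ub * vt * (u - vh - (q - P) / ub + (lam - p) / vt)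
        = u * ub * vt - vh * ub * vt - (q - P) * vt + (lam - p) * ub"
    using assms(1,2) by (simp add: field_simps)
  with assms(3) show ?thesis by simp
qed

lemma u_solved_by_v:
  fixes u ub v vb vt vh lam p P q :: "'a :: field"
  assumes nz: "u \<noteq> 0" "ub \<noteq> 0" "v \<noteq> 0" "vt \<noteq> 0"
    and e2: "u - vh - (q - P) / ub + (lam - p) / vt = 0"
    and e3: "(u - v) * ((q - p) / u + vt) - q + lam = 0"
    and e3_shift: "(ub - vb) * ((q - P) / ub + vh) - q + lam = 0"
    and e4: "(q - p) / u - (lam - p) / v - ub + vb = 0"
  shows "u * vt * (v * vb - vt * vh) = v * (vt * vh * vb - vt^2 * vh + vt * (lam - P) - (lam - p) * vb)"
proof -
  note quad_u = eq3_as_quadratic[OF nz(1) e3]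
  note quad_ub = eq3_as_quadratic[OF nz(2) e3_shift]
  have "u * (vt * u - v * vt - ub * v + vb * v) = 0"
    using quad_u eq4_cleared[OF nz(1,3) e4] by algebra
  hence ub_linear: "vt * u - v * vt - ub * v + vb * v = 0"
    using nz by simp
  have "ub * (u * vt * vb - vt * vh * ub - vt * (lam - P) + (lam - p) * vb) = 0"
    using quad_ub eq2_cleared[OF nz(2,4) e2] by algebra
  hence "u * vt * vb - vt * vh * ub - vt * (lam - P) + (lam - p) * vb = 0"
    using nz by simp
  with ub_linear show ?thesis by algebra
qed

lemma quadratic_at_rational_root:
  fixes u v vt lam p q D M :: "'a :: field"
  assumes "v \<noteq> 0"
    and "vt * u^2 + (lam - p - v * vt) * u - v * (q - p) = 0"
    and "u * vt * D = v * M"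
  shows "v * M^2 + (lam - p - v * vt) * D * M - (q - p) * vt * D^2 = 0"
proof -
  have "v * (v * M^2 + (lam - p - v * vt) * D * M - (q - p) * vt * D^2) = 0"
    using assms(2,3) by algebra
  with assms(1) show ?thesis by simp
qed

lemma quad_graph_equation_at_vertex:
  fixes u ub v vb vt vh lam p P q :: "'a :: field"
  assumes nz: "u \<noteq> 0" "ub \<noteq> 0" "v \<noteq> 0" "vt \<noteq> 0"
    and e2: "u - vh - (q - P) / ub + (lam - p) / vt = 0"
    and e3: "(u - v) * ((q - p) / u + vt) - q + lam = 0"
    and e3_shift: "(ub - vb) * ((q - P) / ub + vh) - q + lam = 0"
    and e4: "(q - p) / u - (lam - p) / v - ub + vb = 0"
  shows "q * (v * vb - vt * vh)^2
    + (v - vh) * (vb - vt) * (lam - v * vb) * (lam - vt * vh)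
    + (P * v - p * vh) * (p * vb - P * vt)
    - (p + P) * (lam * v * vb + lam * vt * vh - 2 * v * vb * vt * vh)
    + (P * v * vt + p * vb * vh) * (2 * lam - v * vb - vt * vh) = 0"
proof -
  define D where "D = v * vb - vt * vh"
  define M where "M = vt * vh * vb - vt^2 * vh + vt * (lam - P) - (lam - p) * vb"
  have "u * vt * D = v * M"
    using u_solved_by_v[OF nz e2 e3 e3_shift e4] unfolding D_def M_def .
  from quadratic_at_rational_root[OF nz(3) eq3_as_quadratic[OF nz(1) e3] this]
  have "v * M^2 + (lam - p - v * vt) * D * M - (q - p) * vt * D^2 = 0" .
  hence "vt * (q * (v * vb - vt * vh)^2
    + (v - vh) * (vb - vt) * (lam - v * vb) * (lam - vt * vh)
    + (P * v - p * vh) * (p * vb - P * vt)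
    - (p + P) * (lam * v * vb + lam * vt * vh - 2 * v * vb * vt * vh)
    + (P * v * vt + p * vb * vh) * (2 * lam - v * vb - vt * vh)) = 0"
    unfolding D_def M_def by algebra
  with nz(4) show ?thesis by simp
qed

theorem mainTheorem8:
  fixes lam :: complex and p q :: "int \<Rightarrow> complex" and u v :: "int \<Rightarrow> int \<Rightarrow> complex"
  assumes u_nz: "\<And>l m. u l m \<noteq> 0"
    and v_nz: "\<And>l m. v l m \<noteq> 0"
    and e1: "\<And>l m. u (l+1) (m+1) - u l m - (q (m+1) - p l) / u l (m+1)
                 + (q m - p (l+1)) / u (l+1) m = 0"
    and e2: "\<And>l m. u l m - v (l+1) (m+1) - (q m - p (l+1)) / u (l+1) m
                 + (lam - p l) / v l (m+1) = 0"
    and e3: "\<And>l m. (u l m - v l m) * ((q m - p l) / u l m + v l (m+1)) - q m + lam = 0"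
    and e4: "\<And>l m. (q m - p l) / u l m - (lam - p l) / v l m - u (l+1) m + v (l+1) m = 0"
  shows "\<forall>l m.
    q m * (v l m * v (l+1) m - v l (m+1) * v (l+1) (m+1))^2
    + (v l m - v (l+1) (m+1)) * (v (l+1) m - v l (m+1))
      * (lam - v l m * v (l+1) m) * (lam - v l (m+1) * v (l+1) (m+1))
    + (p (l+1) * v l m - p l * v (l+1) (m+1)) * (p l * v (l+1) m - p (l+1) * v l (m+1))
    - (p l + p (l+1)) * (lam * v l m * v (l+1) m + lam * v l (m+1) * v (l+1) (m+1)
        - 2 * v l m * v (l+1) m * v l (m+1) * v (l+1) (m+1))
    + (p (l+1) * v l m * v l (m+1) + p l * v (l+1) m * v (l+1) (m+1))
      * (2 * lam - v l m * v (l+1) m - v l (m+1) * v (l+1) (m+1)) = 0"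
  by (intro allI quad_graph_equation_at_vertex[OF u_nz u_nz v_nz v_nz e2 e3 e3 e4])

end
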